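(* For every integer $r\ge1$ and every $n\ge0$, $$B^{(r)}_{n,q}(x)=\sum_{k=0}^{n}\binom{n}{k}_q\left(\int_0^1B^{(r)}_{n-k,q}(y)\,d_qy\right)B_{k,q}(x)=\sum_{k=0}^{n}\binom{n}{k}_qB^{(r-1)}_{n-k,q}\,B_{k,q}(x);$$ in particular $\int_0^1B^{(r)}_{m,q}(y)\,d_qy=B^{(r-1)}_{m,q}$ for all $m\ge0$.
   Context: Fix $q$ with $0<q<1$. For an integer $n\geq 0$ let $[n]_q=\frac{1-q^n}{1-q}$, $[n]_q!=[n]_q[n-1]_q\cdots[1]_q$ (with $[0]_q!=1$), and for $0\le l\le n$ let $\binom{n}{l}_q=\frac{[n]_q!}{[l]_q!\,[n-l]_q!}$. Let $e_q(t)=\sum_{n\ge0}\frac{t^n}{[n]_q!}$ (a formal power series). The $q$-Bernoulli polynomials $B_{n,q}(x)$ are defined by $\frac{t}{e_q(t)-1}e_q(xt)=\sum_{n\ge0}B_{n,q}(x)\frac{t^n}{[n]_q!}$. For an integer $r\ge0$, the $q$-Bernoulli polynomials of order $r$ are defined by $\left(\frac{t}{e_q(t)-1}\right)^{r}e_q(xt)=\sum_{n\ge0}B^{(r)}_{n,q}(x)\frac{t^n}{[n]_q!}$, with $B^{(r)}_{n,q}=B^{(r)}_{n,q}(0)$ (so $B^{(0)}_{n,q}=\delta_{n,0}$ and $B^{(1)}_{n,q}(x)=B_{n,q}(x)$). The Jackson $q$-integral is $\int_0^1 f(y)\,d_qy=(1-q)\sum_{a=0}^{\infty}f(q^a)q^a$.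 *)

theory Defs
  imports Complex_Main "HOL-Computational_Algebra.Formal_Power_Series"
begin

definition qint :: "real \<Rightarrow> nat \<Rightarrow> real" where
  "qint q n = (1 - q ^ n) / (1 - q)"

definition qfact :: "real \<Rightarrow> nat \<Rightarrow> real" where
  "qfact q n = (\<Prod>i = 1..n. qint q i)"

definition qbinom :: "real \<Rightarrow> nat \<Rightarrow> nat \<Rightarrow> real" where
  "qbinom q n l = qfact q n / (qfact q l * qfact q (n - l))"

text \<open>The formal power series e_q(x t) in the variable t; e_q(t) is the case x = 1.\<close>
definition eq_fps :: "real \<Rightarrow> real \<Rightarrow> real fps" where
  "eq_fps q x = Abs_fps (\<lambda>n. x ^ n / qfact q n)"

definition qBernoulli_poly :: "real \<Rightarrow> nat \<Rightarrow> real \<Rightarrow> real" where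
  "qBernoulli_poly q n x =
     qfact q n * fps_nth ((fps_X / (eq_fps q 1 - 1)) * eq_fps q x) n"

definition qBernoulli_poly_ord :: "real \<Rightarrow> nat \<Rightarrow> nat \<Rightarrow> real \<Rightarrow> real" where
  "qBernoulli_poly_ord q r n x =
     qfact q n * fps_nth ((fps_X / (eq_fps q 1 - 1)) ^ r * eq_fps q x) n"

definition qBernoulli_ord :: "real \<Rightarrow> nat \<Rightarrow> nat \<Rightarrow> real" where
  "qBernoulli_ord q r n = qBernoulli_poly_ord q r n 0"

definition jackson_int :: "real \<Rightarrow> (real \<Rightarrow> real) \<Rightarrow> real" where
  "jackson_int q f = (1 - q) * (\<Sum>a. f (q ^ a) * q ^ a)"

end

theory Submission
  imports Defs
begin

text \<open>
  Since the Jackson integral of y^k over [0,1] is 1/[k+1]_q, integrating e_q(yt) in y gives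
  (e_q(t) - 1)/t, the reciprocal of t/(e_q(t) - 1). Hence integrating the generating function
  (t/(e_q(t)-1))^r e_q(yt) of the order-r polynomials yields (t/(e_q(t)-1))^(r-1), the generating
  function of the order-(r-1) numbers. The expansion in the B_{k,q}(x) is the q-binomial
  convolution read off from (t/(e_q(t)-1))^r e_q(xt) = (t/(e_q(t)-1)) e_q(xt) (t/(e_q(t)-1))^(r-1).
\<close>

lemma qint_pos: "0 < q \<Longrightarrow> q < 1 \<Longrightarrow> 1 \<le> i \<Longrightarrow> 0 < qint q i"
  unfolding qint_def by (simp add: power_less_one_iff)

lemma qfact_0 [simp]: "qfact q 0 = 1"
  unfolding qfact_def by simp

lemma qfact_Suc: "qfact q (Suc n) = qfact q n * qint q (Suc n)"
  unfolding qfact_def by (simp add: prod.cl_ivl_Suc)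

lemma qfact_pos: "0 < q \<Longrightarrow> q < 1 \<Longrightarrow> 0 < qfact q n"
  unfolding qfact_def by (rule prod_pos) (auto intro: qint_pos)

lemma jackson_power_sums:
  fixes q :: real
  assumes "0 < q" "q < 1"
  shows "(\<lambda>a. (q ^ a) ^ k * q ^ a) sums (1 / (1 - q ^ Suc k))"
proof -
  have "(\<lambda>a. (q ^ a) ^ k * q ^ a) = (\<lambda>a. (q ^ Suc k) ^ a)"
    by (auto simp: power_mult_distrib mult.commute simp flip: power_mult)
  moreover have "\<bar>q ^ Suc k\<bar> < 1"
    using assms power_Suc_less_one[OF assms] by simp
  ultimately show ?thesis by (simp add: geometric_sums)
qed

lemma jackson_int_polynomial:
  assumes "0 < q" "q < 1" "finite A"
  shows "jackson_int q (\<lambda>y. \<Sum>i\<in>A. c i * y ^ e i) = (\<Sum>i\<in>A. c i / qint q (Suc (e i)))"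
proof -
  have sums: "(\<lambda>a. c i * ((q ^ a) ^ e i * q ^ a)) sums (c i * (1 / (1 - q ^ Suc (e i))))" for i
    by (intro sums_mult jackson_power_sums assms)
  have "jackson_int q (\<lambda>y. \<Sum>i\<in>A. c i * y ^ e i)
        = (1 - q) * (\<Sum>a. \<Sum>i\<in>A. c i * ((q ^ a) ^ e i * q ^ a))"
    unfolding jackson_int_def by (simp add: sum_distrib_right mult.assoc)
  also have "\<dots> = (1 - q) * (\<Sum>i\<in>A. \<Sum>a. c i * ((q ^ a) ^ e i * q ^ a))"
    using sums by (subst suminf_sum) (auto simp: sums_iff)
  also have "\<dots> = (\<Sum>i\<in>A. (1 - q) * (c i * (1 / (1 - q ^ Suc (e i)))))"
    by (simp only: sums_unique[OF sums, symmetric] sum_distrib_left)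
  also have "\<dots> = (\<Sum>i\<in>A. c i / qint q (Suc (e i)))"
    unfolding qint_def by (simp add: mult_ac)
  finally show ?thesis .
qed

lemma qfact_fps_mult_nth:
  assumes "0 < q" "q < 1"
  shows "qfact q n * fps_nth (F * G) n
    = (\<Sum>k = 0..n. qbinom q n k * (qfact q k * fps_nth F k) * (qfact q (n - k) * fps_nth G (n - k)))"
  unfolding fps_mult_nth sum_distrib_left
proof (rule sum.cong[OF refl])
  fix k
  have "0 < qfact q k" "0 < qfact q (n - k)" using qfact_pos[OF assms] by auto
  then show "qfact q n * (fps_nth F k * fps_nth G (n - k))
    = qbinom q n k * (qfact q k * fps_nth F k) * (qfact q (n - k) * fps_nth G (n - k))"
    unfolding qbinom_def by (simp add: field_simps)
qed

definition qBernoulli_fps :: "real \<Rightarrow> real fps" where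
  "qBernoulli_fps q = fps_X / (eq_fps q 1 - 1)"

definition eq_fps_quot :: "real \<Rightarrow> real fps" where
  "eq_fps_quot q = Abs_fps (\<lambda>n. 1 / qfact q (Suc n))"

lemma eq_fps_0: "eq_fps q 0 = 1"
  by (rule fps_ext) (auto simp: eq_fps_def)

lemma eq_fps_1_minus_1: "eq_fps q 1 - 1 = fps_X * eq_fps_quot q"
  by (rule fps_ext) (auto simp: eq_fps_def eq_fps_quot_def)

lemma qBernoulli_fps_mult_eq_fps_quot:
  assumes "0 < q" "q < 1"
  shows "qBernoulli_fps q * eq_fps_quot q = 1"
proof -
  have nz: "fps_nth (eq_fps_quot q) 0 \<noteq> 0"
    using qfact_pos[OF assms, of 1] by (simp add: eq_fps_quot_def)
  have "qBernoulli_fps q = (1 * fps_X) / (eq_fps_quot q * fps_X)"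
    unfolding qBernoulli_fps_def eq_fps_1_minus_1 by (simp add: mult.commute)
  also have "\<dots> = inverse (eq_fps_quot q)"
    using nz by (subst fps_divide_cancel) (simp_all add: fps_divide_unit)
  finally show ?thesis using nz by (simp add: inverse_mult_eq_1)
qed

lemma qBernoulli_poly_nth:
  "qBernoulli_poly q k x = qfact q k * fps_nth (qBernoulli_fps q * eq_fps q x) k"
  unfolding qBernoulli_poly_def qBernoulli_fps_def ..

lemma qBernoulli_ord_nth:
  "qBernoulli_ord q r n = qfact q n * fps_nth (qBernoulli_fps q ^ r) n"
  unfolding qBernoulli_ord_def qBernoulli_poly_ord_def eq_fps_0 qBernoulli_fps_def by simp

lemma qBernoulli_poly_ord_expand:
  "qBernoulli_poly_ord q r m y
     = (\<Sum>i = 0..m. qfact q m * fps_nth (qBernoulli_fps q ^ r) i / qfact q (m - i) * y ^ (m - i))"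
  unfolding qBernoulli_poly_ord_def qBernoulli_fps_def fps_mult_nth sum_distrib_left
  by (simp add: eq_fps_def mult.assoc)

lemma jackson_int_qBernoulli_poly_ord:
  assumes "0 < q" "q < 1" "1 \<le> r"
  shows "jackson_int q (qBernoulli_poly_ord q r m) = qBernoulli_ord q (r - 1) m"
proof -
  have "jackson_int q (qBernoulli_poly_ord q r m)
      = qfact q m * fps_nth (qBernoulli_fps q ^ r * eq_fps_quot q) m"
    unfolding qBernoulli_poly_ord_expand jackson_int_polynomial[OF assms(1,2) finite_atLeastAtMost]
    by (simp add: fps_mult_nth eq_fps_quot_def qfact_Suc sum_distrib_left)
  also have "qBernoulli_fps q ^ r * eq_fps_quot q
      = qBernoulli_fps q ^ (r - 1) * (qBernoulli_fps q * eq_fps_quot q)"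
    using assms(3) by (cases r) (auto simp: mult.assoc)
  finally show ?thesis
    by (simp add: qBernoulli_fps_mult_eq_fps_quot[OF assms(1,2)] qBernoulli_ord_nth)
qed

lemma qBernoulli_poly_ord_convolution:
  assumes "0 < q" "q < 1" "1 \<le> r"
  shows "qBernoulli_poly_ord q r n x =
    (\<Sum>k = 0..n. qbinom q n k * qBernoulli_ord q (r - 1) (n - k) * qBernoulli_poly q k x)"
proof -
  have "qBernoulli_fps q ^ r * eq_fps q x
      = (qBernoulli_fps q * eq_fps q x) * qBernoulli_fps q ^ (r - 1)"
    using assms(3) by (cases r) (auto simp: algebra_simps)
  then have "qBernoulli_poly_ord q r n x
      = qfact q n * fps_nth ((qBernoulli_fps q * eq_fps q x) * qBernoulli_fps q ^ (r - 1)) n"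
    unfolding qBernoulli_poly_ord_def qBernoulli_fps_def[symmetric] by (simp only:)
  then show ?thesis
    unfolding qfact_fps_mult_nth[OF assms(1,2)] qBernoulli_poly_nth qBernoulli_ord_nth
    by (simp add: mult_ac)
qed

theorem theorem4:
  fixes q x :: real and r n :: nat
  assumes "0 < q" and "q < 1" and "1 \<le> r"
  shows "qBernoulli_poly_ord q r n x =
           (\<Sum>k = 0..n. qbinom q n k
              * jackson_int q (\<lambda>y. qBernoulli_poly_ord q r (n - k) y)
              * qBernoulli_poly q k x)
       \<and> (\<Sum>k = 0..n. qbinom q n k
              * jackson_int q (\<lambda>y. qBernoulli_poly_ord q r (n - k) y)
              * qBernoulli_poly q k x)
         = (\<Sum>k = 0..n. qbinom q n k * qBernoulli_ord q (r - 1) (n - k) * qBernoulli_poly q k x)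
       \<and> (\<forall>m. jackson_int q (\<lambda>y. qBernoulli_poly_ord q r m y) = qBernoulli_ord q (r - 1) m)"
proof -
  have integral: "jackson_int q (\<lambda>y. qBernoulli_poly_ord q r m y) = qBernoulli_ord q (r - 1) m"
    for m using jackson_int_qBernoulli_poly_ord[OF assms] .
  show ?thesis
    unfolding integral using qBernoulli_poly_ord_convolution[OF assms] by simp
qed

end
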